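(* Let $\mathbf V$ be a monoid variety satisfying the identity $x^n\approx x^{n+1}$ for some $n\in\mathbb N$. If $M_\gamma(xx^+yy^+)\notin\mathbf V$, then $\mathbf V$ satisfies the identity $x^ny^n\approx (x^ny^n)^n$.
   Context: Words are elements of the free monoid $\mathfrak X^\ast$ over a countably infinite alphabet $\mathfrak X$. For a word $\mathbf w$, a letter is simple in $\mathbf w$ if it occurs exactly once. The congruence $\gamma$ on $\mathfrak X^\ast$ is defined by: $\mathbf u\mathrel\gamma\mathbf v$ iff $\mathbf u$ and $\mathbf v$ have the same set of simple letters and $\mathbf u$ can be obtained from $\mathbf v$ by changing the individual exponents of letters (i.e. $\mathbf u=x_1^{e_1}\cdots x_r^{e_r}$, $\mathbf v=x_1^{f_1}\cdots x_r^{f_r}$ with letters $x_i$ and $e_i,f_i\ge1$). For $\gamma$-classes $\mathtt u,\mathtt v$ write $\mathtt v\le\mathtt u$ if $\mathtt u=\mathtt p\mathtt v\mathtt s$ for some $\gamma$-classes $\mathtt p,\mathtt s$. For a set $\mathtt W$ of $\gamma$-classes, $M_\gamma(\mathtt W)$ is the Rees quotient of $\mathfrak X^\ast/\gamma$ by the ideal of all $\gamma$-classes not $\le$ any member of $\mathtt W$. $\gamma$-classes are written as regular expressions with $x^+=\{x^k\mid k\ge1\}$; thus $xx^+yy^+$ is the $\gamma$-class of $x^2y^2$, namely $\{x^ay^b\mid a,b\ge2\}$, and $M_\gamma(xx^+yy^+)=M_\gamma(\{xx^+yy^+\})$. *)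

theory Defs
  imports Main
begin

type_synonym word = "nat list"

definition simple_letters :: "word \<Rightarrow> nat set" where
  "simple_letters w = {x. count_list w x = 1}"

text \<open>The congruence gamma: same simple letters and same sequence
  x1 ... xr of letters up to individual exponents, i.e. the words agree
  after collapsing runs of equal adjacent letters.\<close>
definition gamma :: "word \<Rightarrow> word \<Rightarrow> bool" where
  "gamma u v \<longleftrightarrow> simple_letters u = simple_letters v \<and> remdups_adj u = remdups_adj v"

definition subst :: "(nat \<Rightarrow> word) \<Rightarrow> word \<Rightarrow> word" where
  "subst \<sigma> w = concat (map \<sigma> w)"

text \<open>Identity u = v holds in the variety with equational theory T.\<close>
definition fully_invariant_congruence :: "(word \<times> word) set \<Rightarrow> bool" where
  "fully_invariant_congruence T \<longleftrightarrow>
     equiv UNIV T \<and>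
     (\<forall>u v p s. (u, v) \<in> T \<longrightarrow> (p @ u @ s, p @ v @ s) \<in> T) \<and>
     (\<forall>u v \<sigma>. (u, v) \<in> T \<longrightarrow> (subst \<sigma> u, subst \<sigma> v) \<in> T)"

text \<open>The letters x and y are 0 and 1; the generating class xx^+yy^+ is the
  gamma-class of x^2 y^2.  A word w represents a nonzero element of
  M_gamma(xx^+yy^+) iff its gamma-class is <= that class.\<close>
definition MW_nonzero :: "word \<Rightarrow> bool" where
  "MW_nonzero w \<longleftrightarrow> (\<exists>p s. gamma [0,0,1,1] (p @ w @ s))"

text \<open>Equality of the images of two words in M_gamma(xx^+yy^+)
  (Rees quotient: all words of the ideal are identified with 0).\<close>
definition MW_eq :: "word \<Rightarrow> word \<Rightarrow> bool" where
  "MW_eq a b \<longleftrightarrow> (MW_nonzero a \<longleftrightarrow> MW_nonzero b) \<and> (MW_nonzero a \<longrightarrow> gamma a b)"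

text \<open>M_gamma(xx^+yy^+) satisfies u = v: every homomorphism from the free monoid
  into it factors as a substitution followed by the quotient map.\<close>
definition MW_satisfies :: "word \<Rightarrow> word \<Rightarrow> bool" where
  "MW_satisfies u v \<longleftrightarrow> (\<forall>\<sigma>. MW_eq (subst \<sigma> u) (subst \<sigma> v))"

definition MW_in :: "(word \<times> word) set \<Rightarrow> bool" where
  "MW_in T \<longleftrightarrow> (\<forall>(u, v) \<in> T. MW_satisfies u v)"

definition wpow :: "word \<Rightarrow> nat \<Rightarrow> word" where
  "wpow w k = concat (replicate k w)"

end

theory Submission
  imports Defs
begin

text \<open>Let \<open>u \<approx> v\<close> be an identity of \<open>\<^bold>V\<close> that fails in \<open>M\<^sub>\<gamma>(xx\<^sup>+yy\<^sup>+)\<close>;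
  after substituting and possibly swapping sides, \<open>u\<close> is a nonzero word, hence of the form
  \<open>x\<^sup>ay\<^sup>b\<close>, and \<open>v\<close> is not \<open>\<gamma>\<close>-related to it.  Either some letter occurs at most once on one
  side and a different number of times on the other: deleting all other letters and
  substituting \<open>w\<close> for it gives \<open>w\<^sup>a \<approx> w\<^sup>b\<close> with \<open>a \<le> 1 < b\<close>, and with \<open>w\<^sup>n \<approx> w\<^sup>n\<^sup>+\<^sup>1\<close>
  this yields \<open>w \<approx> w\<^sup>n\<close>.  Or both sides have the same simple letters and content, and
  \<open>v\<close> contains a factor \<open>yx\<close>.  Then the substitution \<open>x \<mapsto> x\<^sup>n, y \<mapsto> y\<^sup>n\<close>, framed by
  \<open>x\<^sup>n \<dots> y\<^sup>n\<close>, turns \<open>u\<close> into \<open>x\<^sup>ny\<^sup>n\<close> and \<open>v\<close> into \<open>(x\<^sup>ny\<^sup>n)\<^sup>k\<^sup>+\<^sup>1\<close> with \<open>k \<ge> 1\<close>, because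
  \<open>x\<^sup>nx\<^sup>n \<approx> x\<^sup>n\<close> and \<open>y\<^sup>ny\<^sup>n \<approx> y\<^sup>n\<close>; again \<open>x\<^sup>ny\<^sup>n \<approx> (x\<^sup>ny\<^sup>n)\<^sup>n\<close> follows.\<close>

lemma wpow_0 [simp]: "wpow w 0 = []"
  by (simp add: wpow_def)

lemma wpow_Suc [simp]: "wpow w (Suc k) = w @ wpow w k"
  by (simp add: wpow_def)

lemma wpow_add: "wpow w (a + b) = wpow w a @ wpow w b"
  by (induction a) auto

lemma wpow_commute: "w @ wpow w k = wpow w k @ w"
  by (induction k) auto

lemma subst_Nil [simp]: "subst \<sigma> [] = []"
  by (simp add: subst_def)

lemma subst_Cons [simp]: "subst \<sigma> (c # w) = \<sigma> c @ subst \<sigma> w"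
  by (simp add: subst_def)

lemma subst_append [simp]: "subst \<sigma> (u @ v) = subst \<sigma> u @ subst \<sigma> v"
  by (simp add: subst_def)

lemma subst_wpow: "subst \<sigma> (wpow w k) = wpow (subst \<sigma> w) k"
  by (induction k) auto

lemma subst_single_letter: "subst (\<lambda>d. if d = c then w else []) v = wpow w (count_list v c)"
  by (induction v) auto

fun descents :: "'a::linorder list \<Rightarrow> nat" where
  "descents (a # b # xs) = (if b < a then 1 else 0) + descents (b # xs)"
| "descents _ = 0"

lemma descents_eq_0_iff_sorted: "descents w = 0 \<longleftrightarrow> sorted w"
  by (induction w rule: descents.induct) (auto simp: not_less intro: order.trans)

lemma remdups_adj_append_remdups_adj_left:
  "remdups_adj (remdups_adj xs @ ys) = remdups_adj (xs @ ys)"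
proof (induction xs rule: remdups_adj.induct)
  case (3 x y xs)
  then show ?case
    by (cases "x = y") (simp_all, metis remdups_adj_Cons_alt append_Cons remdups_adj.simps(3))
qed simp_all

lemma remdups_adj_append_remdups_adj_right:
  "remdups_adj (xs @ remdups_adj ys) = remdups_adj (xs @ ys)"
  using remdups_adj_append_remdups_adj_left [of "rev ys" "rev xs"]
  by (metis remdups_adj_rev rev_append rev_rev_ident)

lemma gamma_context:
  assumes "gamma a b"
  shows "gamma (p @ a @ s) (p @ b @ s)"
proof -
  have rem: "remdups_adj a = remdups_adj b" and simple: "simple_letters a = simple_letters b"
    using assms by (simp_all add: gamma_def)
  have "remdups_adj (p @ a @ s) = remdups_adj (p @ b @ s)"
    by (metis rem remdups_adj_append_remdups_adj_left remdups_adj_append_remdups_adj_right)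
  moreover have "count_list a c = 0 \<longleftrightarrow> count_list b c = 0" for c
    using rem by (metis remdups_adj_set count_list_0_iff)
  with simple have "count_list (p @ a @ s) c = 1 \<longleftrightarrow> count_list (p @ b @ s) c = 1" for c
    unfolding simple_letters_def set_eq_iff mem_Collect_eq count_list_append
    by (auto simp: add_is_1)
  then have "simple_letters (p @ a @ s) = simple_letters (p @ b @ s)"
    by (simp add: simple_letters_def)
  ultimately show ?thesis
    by (simp add: gamma_def)
qed

lemma MW_nonzero_gamma:
  assumes "gamma a b" "MW_nonzero a"
  shows "MW_nonzero b"
proof -
  obtain p s where "gamma [0, 0, 1, 1] (p @ a @ s)"
    using assms(2) by (auto simp: MW_nonzero_def)
  moreover have "gamma (p @ a @ s) (p @ b @ s)"
    using assms(1) by (rule gamma_context)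
  ultimately have "gamma [0, 0, 1, 1] (p @ b @ s)"
    by (simp add: gamma_def)
  then show ?thesis
    by (auto simp: MW_nonzero_def)
qed

lemma sorted_remdups_adj_iff: "sorted (remdups_adj w) \<longleftrightarrow> sorted w"
  by (induction w rule: remdups_adj.induct) auto

lemma distinct_remdups_adj_if_sorted: "sorted w \<Longrightarrow> distinct (remdups_adj w)"
  by (induction w rule: remdups_adj.induct) (auto simp: less_le)

lemma MW_nonzero_sorted:
  assumes "MW_nonzero w"
  shows "sorted w" "set w \<subseteq> {0, 1}"
proof -
  obtain p s where "gamma [0, 0, 1, 1] (p @ w @ s)"
    using assms by (auto simp: MW_nonzero_def)
  then have rem: "remdups_adj (p @ w @ s) = [0, 1]"
    by (simp add: gamma_def)
  then have "sorted (p @ w @ s)"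
    using sorted_remdups_adj_iff [of "p @ w @ s"] by simp
  then show "sorted w"
    by (simp add: sorted_append)
  have "set w \<subseteq> set (p @ w @ s)"
    by auto
  also have "\<dots> = set (remdups_adj (p @ w @ s))"
    by (rule remdups_adj_set [symmetric])
  also have "\<dots> = {0, 1}"
    by (simp add: rem)
  finally show "set w \<subseteq> {0, 1}" .
qed

definition low_counts_agree :: "word \<Rightarrow> word \<Rightarrow> bool" where
  "low_counts_agree A B \<longleftrightarrow>
     (\<forall>c. count_list A c \<le> 1 \<or> count_list B c \<le> 1 \<longrightarrow> count_list A c = count_list B c)"

lemma set_eq_if_low_counts_agree:
  assumes "low_counts_agree A B"
  shows "set A = set B"
proof -
  have "count_list A c = 0 \<longleftrightarrow> count_list B c = 0" for c
    using assms by (auto simp: low_counts_agree_def)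
  then show ?thesis
    unfolding set_eq_iff by (metis count_list_0_iff)
qed

lemma gamma_if_sorted_and_low_counts_agree:
  assumes "sorted A" "sorted B" "low_counts_agree A B"
  shows "gamma A B"
proof -
  have "remdups_adj A = remdups_adj B"
    using assms set_eq_if_low_counts_agree
    by (intro sorted_distinct_set_unique) (simp_all add: distinct_remdups_adj_if_sorted)
  moreover have "simple_letters A = simple_letters B"
    using assms(3) by (auto simp: simple_letters_def low_counts_agree_def)
  ultimately show ?thesis
    by (simp add: gamma_def)
qed

locale fully_invariant =
  fixes T :: "(word \<times> word) set"
  assumes fully_invariant: "fully_invariant_congruence T"
begin

definition T_equiv :: "word \<Rightarrow> word \<Rightarrow> bool" (infix "\<approx>" 50)
  where "u \<approx> v \<longleftrightarrow> (u, v) \<in> T"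

lemma T_refl: "u \<approx> u"
  using fully_invariant
  by (auto simp: fully_invariant_congruence_def equiv_def T_equiv_def dest: refl_onD)

lemma T_sym: "u \<approx> v \<Longrightarrow> v \<approx> u"
  using fully_invariant
  by (auto simp: fully_invariant_congruence_def equiv_def T_equiv_def dest: symD)

lemma T_trans [trans]: "u \<approx> v \<Longrightarrow> v \<approx> w \<Longrightarrow> u \<approx> w"
  using fully_invariant
  by (auto simp: fully_invariant_congruence_def equiv_def T_equiv_def dest: transD)

lemma T_context: "u \<approx> v \<Longrightarrow> p @ u @ s \<approx> p @ v @ s"
  using fully_invariant by (simp add: fully_invariant_congruence_def T_equiv_def)

lemma T_append_left: "u \<approx> v \<Longrightarrow> p @ u \<approx> p @ v"
  using T_context [of u v p "[]"] by simp

lemma T_append_right: "u \<approx> v \<Longrightarrow> u @ s \<approx> v @ s"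
  using T_context [of u v "[]" s] by simp

lemma T_subst: "u \<approx> v \<Longrightarrow> subst \<sigma> u \<approx> subst \<sigma> v"
  using fully_invariant by (simp add: fully_invariant_congruence_def T_equiv_def)

lemma obtain_separating_identity:
  assumes "\<not> MW_in T"
  obtains A B where "A \<approx> B" "MW_nonzero A" "\<not> gamma A B"
proof -
  obtain u v \<sigma> where "u \<approx> v" and ne: "\<not> MW_eq (subst \<sigma> u) (subst \<sigma> v)"
    using assms by (auto simp: MW_in_def MW_satisfies_def T_equiv_def)
  then have uv: "subst \<sigma> u \<approx> subst \<sigma> v" "subst \<sigma> v \<approx> subst \<sigma> u"
    by (auto intro: T_subst T_sym)
  show thesis
  proof (cases "MW_nonzero (subst \<sigma> u)")
    case True
    with ne uv(1) show thesis
      using that MW_nonzero_gamma by (auto simp: MW_eq_def)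
  next
    case False
    with ne uv(2) show thesis
      using that MW_nonzero_gamma by (auto simp: MW_eq_def)
  qed
qed

lemma pow_period:
  assumes "w \<approx> wpow w (1 + c)"
  shows "w \<approx> wpow w (1 + t * c)"
proof (induction t)
  case 0
  show ?case by (simp add: T_refl)
next
  case (Suc t)
  have "wpow w (1 + Suc t * c) = wpow w (t * c) @ wpow w (1 + c)"
    by (simp del: wpow_Suc flip: wpow_add add: algebra_simps)
  also have "\<dots> \<approx> wpow w (t * c) @ w"
    using T_sym [OF assms] by (rule T_append_left)
  also have "\<dots> = wpow w (1 + t * c)"
    by (simp add: wpow_commute)
  also have "\<dots> \<approx> w"
    using Suc by (rule T_sym)
  finally show ?case
    by (rule T_sym)
qed

end

locale aperiodic = fully_invariant +
  fixes n :: nat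
  assumes aperiodic_identity: "wpow [0] n \<approx> wpow [0] (n + 1)"
begin

lemma pow_absorb: "wpow w (n + k) \<approx> wpow w n"
proof (induction k)
  case 0
  show ?case by (simp add: T_refl)
next
  case (Suc k)
  have "wpow w (n + 1) \<approx> wpow w n"
    using T_sym [OF T_subst [OF aperiodic_identity, of "\<lambda>_. w"]] by (simp add: subst_wpow)
  then have "wpow w (n + 1) @ wpow w k \<approx> wpow w n @ wpow w k"
    by (rule T_append_right)
  then have "wpow w (n + Suc k) \<approx> wpow w (n + k)"
    by (simp del: wpow_Suc flip: wpow_add add: algebra_simps)
  also note Suc
  finally show ?case .
qed

lemma pow_square: "wpow w n @ wpow w n \<approx> wpow w n"
  using pow_absorb [of w n] by (simp add: wpow_add)

lemma pow_collapse:
  assumes "wpow w a \<approx> wpow w b" "a < b" "a \<le> 1"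
  shows "w \<approx> wpow w n"
proof -
  have "n \<le> n * (b - a)"
    using \<open>a < b\<close> by auto
  have "w = wpow w (1 - a) @ wpow w a"
    using \<open>a \<le> 1\<close> by (cases a) simp_all
  also have "\<dots> \<approx> wpow w (1 - a) @ wpow w b"
    using assms(1) by (rule T_append_left)
  also have "\<dots> = wpow w (1 + (b - a))"
    using assms(2,3) by (simp del: wpow_Suc flip: wpow_add add: Suc_diff_le)
  finally have "w \<approx> wpow w (1 + n * (b - a))"
    by (rule pow_period)
  also have "\<dots> = wpow w (n + (1 + n * (b - a) - n))"
    using \<open>n \<le> n * (b - a)\<close> by (intro arg_cong [where f = "wpow w"]) arith
  also have "\<dots> \<approx> wpow w n"
    by (rule pow_absorb)
  finally show ?thesis .
qed

lemma pow_collapse_if_not_low_counts_agree: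
  assumes "A \<approx> B" "\<not> low_counts_agree A B"
  shows "w \<approx> wpow w n"
proof -
  obtain c where c: "count_list A c \<noteq> count_list B c" "count_list A c \<le> 1 \<or> count_list B c \<le> 1"
    using assms(2) by (auto simp: low_counts_agree_def)
  have "wpow w (count_list A c) \<approx> wpow w (count_list B c)"
    using T_subst [OF assms(1), of "\<lambda>d. if d = c then w else []"]
    by (simp only: subst_single_letter)
  with c show ?thesis
    by (cases "count_list A c < count_list B c") (auto intro: pow_collapse T_sym)
qed

text \<open>In \<open>x\<^sup>n P(x\<^sup>n, y\<^sup>n) y\<^sup>n\<close> adjacent equal blocks merge, so only the descents \<open>yx\<close>
  of \<open>P\<close> survive, each one starting a new factor \<open>x\<^sup>ny\<^sup>n\<close>.\<close>

lemma blocks_collapse: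
  assumes "set P \<subseteq> {0, 1}"
  shows "wpow [0] n @ subst (\<lambda>c. wpow [c] n) P @ wpow [1] n
           \<approx> wpow (wpow [0] n @ wpow [1] n) (Suc (descents P))"
  using assms
proof (induction P rule: descents.induct)
  case (1 a b xs)
  let ?X = "wpow [0] n" and ?Y = "wpow [1] n" and ?h = "\<lambda>c. wpow [c] n"
  let ?w = "subst ?h (b # xs) @ ?Y"
  have IH: "?X @ ?w \<approx> wpow (?X @ ?Y) (Suc (descents (b # xs)))"
    using 1 by simp
  from "1.prems" consider "a = 0" | "a = 1" "b = 1" | "a = 1" "b = 0"
    by auto
  then show ?case
  proof cases
    case 1
    have "?X @ subst ?h (a # b # xs) @ ?Y = (?X @ ?X) @ ?w"
      using 1 by simp
    also have "\<dots> \<approx> ?X @ ?w"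
      using pow_square by (rule T_append_right)
    also note IH
    finally show ?thesis
      using 1 by simp
  next
    case 2
    have "?X @ subst ?h (a # b # xs) @ ?Y = ?X @ (?Y @ ?Y) @ subst ?h xs @ ?Y"
      using 2 by simp
    also have "\<dots> \<approx> ?X @ ?Y @ subst ?h xs @ ?Y"
      using pow_square by (rule T_context)
    also have "\<dots> \<approx> wpow (?X @ ?Y) (Suc (descents (b # xs)))"
      using IH 2 by simp
    finally show ?thesis
      using 2 by simp
  next
    case 3
    have "?X @ subst ?h (a # b # xs) @ ?Y = (?X @ ?Y) @ ?X @ subst ?h xs @ ?Y"
      using 3 by simp
    also have "\<dots> \<approx> (?X @ ?Y) @ (?X @ ?X) @ subst ?h xs @ ?Y"
      using T_sym [OF pow_square] by (rule T_context)
    also have "\<dots> = (?X @ ?Y) @ ?X @ ?w"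
      using 3 by simp
    also have "\<dots> \<approx> (?X @ ?Y) @ wpow (?X @ ?Y) (Suc (descents (b # xs)))"
      using IH by (rule T_append_left)
    finally show ?thesis
      using 3 by simp
  qed
next
  case "2_1"
  show ?case by (simp add: T_refl)
next
  case ("2_2" a)
  then consider "a = 0" | "a = 1"
    by auto
  then show ?case
  proof cases
    case 1
    then show ?thesis
      using T_append_right [OF pow_square [of "[0]"], of "wpow [1] n"] by simp
  next
    case 2
    then show ?thesis
      using T_append_left [OF pow_square [of "[1]"], of "wpow [0] n"] by simp
  qed
qed

lemma pow_collapse_if_unsorted:
  assumes "A \<approx> B" "sorted A" "\<not> sorted B" "set A \<subseteq> {0, 1}" "set B \<subseteq> {0, 1}"
  shows "wpow [0] n @ wpow [1] n \<approx> wpow (wpow [0] n @ wpow [1] n) n"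
proof -
  let ?X = "wpow [0] n" and ?Y = "wpow [1] n" and ?h = "\<lambda>c. wpow [c] n"
  have "descents A = 0"
    using assms(2) by (simp add: descents_eq_0_iff_sorted)
  then have "wpow (?X @ ?Y) 1 \<approx> ?X @ subst ?h A @ ?Y"
    using T_sym [OF blocks_collapse [OF assms(4)]] by simp
  also have "\<dots> \<approx> ?X @ subst ?h B @ ?Y"
    using assms(1) by (intro T_context T_subst)
  also have "\<dots> \<approx> wpow (?X @ ?Y) (Suc (descents B))"
    using assms(5) by (rule blocks_collapse)
  finally have "wpow (?X @ ?Y) 1 \<approx> wpow (?X @ ?Y) (Suc (descents B))" .
  moreover have "0 < descents B"
    using assms(3) by (metis descents_eq_0_iff_sorted gr0I)
  ultimately show ?thesis
    using pow_collapse [of "?X @ ?Y" 1 "Suc (descents B)"] by simp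
qed

end

theorem lemma4p1:
  fixes T :: "(word \<times> word) set" and n :: nat
  assumes "fully_invariant_congruence T"
    and "1 \<le> n"
    and "(wpow [0] n, wpow [0] (n + 1)) \<in> T"
    and "\<not> MW_in T"
  shows "(wpow [0] n @ wpow [1] n, wpow (wpow [0] n @ wpow [1] n) n) \<in> T"
proof -
  interpret fully_invariant T
    using assms(1) by (rule fully_invariant.intro)
  interpret aperiodic T n
    using assms(3) by unfold_locales (simp add: T_equiv_def)
  obtain A B where AB: "A \<approx> B" "MW_nonzero A" "\<not> gamma A B"
    using assms(4) by (rule obtain_separating_identity)
  have A: "sorted A" "set A \<subseteq> {0, 1}"
    using MW_nonzero_sorted [OF AB(2)] by simp_all
  have "wpow [0] n @ wpow [1] n \<approx> wpow (wpow [0] n @ wpow [1] n) n"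
  proof (cases "low_counts_agree A B")
    case True
    have "\<not> sorted B"
      using gamma_if_sorted_and_low_counts_agree [OF A(1) _ True] AB(3) by blast
    moreover have "set B \<subseteq> {0, 1}"
      using set_eq_if_low_counts_agree [OF True] A(2) by simp
    ultimately show ?thesis
      by (rule pow_collapse_if_unsorted [OF AB(1) A(1) _ A(2)])
  next
    case False
    with AB(1) show ?thesis
      by (rule pow_collapse_if_not_low_counts_agree)
  qed
  then show ?thesis
    by (simp add: T_equiv_def)
qed

end
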